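(* Let $v, v'$ be pure (index-free) $\lambda$-terms. The following are equivalent: (1) there is a top-level term $t$ such that $v \mapsto^* t$ in the indexed small-step head-reduction semantics, $t$ is irreducible there (there is no $t'$ with $t \mapsto t'$), and $t \hookrightarrow^* v'$ by the indexed readback relation; (2) there is a command $c$ of the projection-based head-reduction machine such that $\langle v \,\|\, \mathsf{tp}\rangle \to^* c$, $c$ is irreducible in that machine (there is no $c'$ with $c \to c'$), and $c \hookrightarrow^* v'$ by the machine's readback relation. Here $\to^*$, $\mapsto^*$ and $\hookrightarrow^*$ denote reflexive–transitive closures.
   Context: Pure $\lambda$-terms: $v ::= x \mid v\,v \mid \lambda x.v$; substitution $v[v'/x]$ is capture-avoiding. Indexed small-step semantics. Indices $i ::= \mathrm{zero} \mid \mathrm{succ}(i)$. Terms $v ::= x \mid v\,v \mid \lambda x.v \mid i$. Top-level terms $t ::= v \mid \lambda.t$ (a variable-free binder usable only at top level). Evaluation contexts $E ::= \Box \mid E\,v$. Top-level contexts $S ::= \Box \mid \lambda.S$. $\mathrm{Count}(\Box)=\mathrm{zero}$, $\mathrm{Count}(\lambda.S)=\mathrm{succ}(\mathrm{Count}(S))$. Reduction rules: $S[E[(\lambda x.v)\,v']] \mapsto S[E[v[v'/x]]]$ and $S[\lambda x.v] \mapsto S[\lambda.v[\mathrm{Count}(S)/x]]$. Readback rule: $S[\lambda.v] \hookrightarrow S[\lambda x.v[x/\mathrm{Count}(S)]]$, where $x$ is fresh and $v[x/i]$ replaces every occurrence of the index $i$ in $v$ by $x$. A top-level term $S[v]$ is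 legal iff every index $i$ occurring in $v$ satisfies $i < \mathrm{Count}(S)$; only legal top-level terms are considered. Projection-based head-reduction machine. Commands $c ::= \langle v \,\|\, E\rangle$; terms $v ::= x \mid v\,v \mid \lambda x.v \mid \mathsf{car}(S)$; co-terms $E ::= v\cdot E \mid S$; stuck co-terms $S ::= \mathsf{tp} \mid \mathsf{cdr}(S)$. Rules: $\langle v\,v' \,\|\, E\rangle \to \langle v \,\|\, v'\cdot E\rangle$; $\langle \lambda x.v \,\|\, v'\cdot E\rangle \to \langle v[v'/x] \,\|\, E\rangle$; $\langle \lambda x.v \,\|\, S\rangle \to \langle v[\mathsf{car}(S)/x] \,\|\, \mathsf{cdr}(S)\rangle$. Readback rules: $\langle v \,\|\, v'\cdot E\rangle \hookrightarrow \langle v\,v' \,\|\, E\rangle$; $\langle v \,\|\, \mathsf{tp}\rangle \hookrightarrow v$; $\langle v \,\|\, \mathsf{cdr}(S)\rangle \hookrightarrow \langle \lambda x.v[x/\mathsf{car}(S)] \,\|\, S\rangle$ with $x$ fresh, where $v[x/\mathsf{car}(S)]$ replaces every occurrence of $\mathsf{car}(S)$ in $v$ by $x$. Writing $\mathsf{cdr}^n$ for $n$ applications of $\mathsf{cdr}$, set $\mathsf{cdr}^n(\mathsf{tp}) < \mathsf{cdr}^m(\mathsf{tp})$ iff $n<m$. A command $\langle v_1 \,\|\, v_2\cdots v_n\cdot S\rangle$ is legal iff for every $\mathsf{car}(S')$ occurring in any $v_i$, $S' < S$; only legal commands are considered. *)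

theory Defs
  imports Main
begin

section \<open>Pure lambda terms (de Bruijn representation, i.e. modulo alpha)\<close>

datatype lam = LVar nat | LApp lam lam | LLam lam

text \<open>'c tm: de Bruijn lambda terms with an extra kind of atom Cst.
  For the indexed semantics 'c = nat (Cst i is the index i = succ^i(zero)).
  For the machine 'c = stuck (Cst S is car(S)).\<close>

datatype 'c tm = Var nat | App "'c tm" "'c tm" | Lam "'c tm" | Cst 'c

fun emb :: "lam \<Rightarrow> 'c tm" where
  "emb (LVar n) = Var n"
| "emb (LApp a b) = App (emb a) (emb b)"
| "emb (LLam a) = Lam (emb a)"

fun csts :: "'c tm \<Rightarrow> 'c set" where
  "csts (Var n) = {}"
| "csts (App a b) = csts a \<union> csts b"
| "csts (Lam a) = csts a"
| "csts (Cst c) = {c}"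

fun lift :: "nat \<Rightarrow> 'c tm \<Rightarrow> 'c tm" where
  "lift k (Var i) = Var (if i < k then i else Suc i)"
| "lift k (App a b) = App (lift k a) (lift k b)"
| "lift k (Lam a) = Lam (lift (Suc k) a)"
| "lift k (Cst c) = Cst c"

text \<open>Capture-avoiding substitution of s for bound variable k (lowering the others).
  subst b 0 a is the term b[a/x] for a redex (\<lambda>x.b) a.\<close>
fun subst :: "'c tm \<Rightarrow> nat \<Rightarrow> 'c tm \<Rightarrow> 'c tm" where
  "subst (Var i) k s = (if i < k then Var i else if i = k then s else Var (i - 1))"
| "subst (App a b) k s = App (subst a k s) (subst b k s)"
| "subst (Lam a) k s = Lam (subst a (Suc k) (lift 0 s))"
| "subst (Cst c) k s = Cst c"

text \<open>abstr c k v: replace every occurrence of the constant c by a fresh variable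
  bound at depth k (shifting free variables). Lam (abstr c 0 v) is \<lambda>x. v[x/c].\<close>
fun abstr :: "'c \<Rightarrow> nat \<Rightarrow> 'c tm \<Rightarrow> 'c tm" where
  "abstr c k (Var i) = Var (if i < k then i else Suc i)"
| "abstr c k (App a b) = App (abstr c k a) (abstr c k b)"
| "abstr c k (Lam a) = Lam (abstr c (Suc k) a)"
| "abstr c k (Cst d) = (if d = c then Var k else Cst d)"

datatype top = Body "nat tm" | TLam top

text \<open>Top-level context S with Count(S) = n, plugged with t.\<close>
definition plugS :: "nat \<Rightarrow> top \<Rightarrow> top" where
  "plugS n t = (TLam ^^ n) t"

text \<open>Evaluation contexts E ::= \<box> | E v, as the list of arguments.\<close>
definition plugE :: "'c tm \<Rightarrow> 'c tm list \<Rightarrow> 'c tm" where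
  "plugE r es = foldl App r es"

fun top_count :: "top \<Rightarrow> nat" where
  "top_count (Body v) = 0"
| "top_count (TLam t) = Suc (top_count t)"

fun top_body :: "top \<Rightarrow> nat tm" where
  "top_body (Body v) = v"
| "top_body (TLam t) = top_body t"

definition legal_top :: "top \<Rightarrow> bool" where
  "legal_top t \<longleftrightarrow> (\<forall>i \<in> csts (top_body t). i < top_count t)"

inductive istep :: "top \<Rightarrow> top \<Rightarrow> bool" where
  beta: "legal_top (plugS n (Body (plugE (App (Lam b) a) es))) \<Longrightarrow>
     istep (plugS n (Body (plugE (App (Lam b) a) es))) (plugS n (Body (plugE (subst b 0 a) es)))"
| lam: "legal_top (plugS n (Body (Lam b))) \<Longrightarrow>
     istep (plugS n (Body (Lam b))) (plugS n (TLam (Body (subst b 0 (Cst n)))))"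

inductive irb :: "top \<Rightarrow> top \<Rightarrow> bool" where
  "legal_top (plugS n (TLam (Body v))) \<Longrightarrow>
     irb (plugS n (TLam (Body v))) (plugS n (Body (Lam (abstr n 0 v))))"

datatype stuck = Tp | Cdr stuck

fun depth :: "stuck \<Rightarrow> nat" where
  "depth Tp = 0"
| "depth (Cdr s) = Suc (depth s)"

definition stuck_less :: "stuck \<Rightarrow> stuck \<Rightarrow> bool" where
  "stuck_less s s' \<longleftrightarrow> depth s < depth s'"

text \<open>Terms of the machine: stuck tm, where Cst S stands for car(S).
  Co-terms E ::= v . E | S.\<close>
datatype coterm = Push "stuck tm" coterm | Stk stuck

datatype cmd = Cmd "stuck tm" coterm

fun co_stk :: "coterm \<Rightarrow> stuck" where
  "co_stk (Push v e) = co_stk e"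
| "co_stk (Stk s) = s"

fun co_args :: "coterm \<Rightarrow> stuck tm list" where
  "co_args (Push v e) = v # co_args e"
| "co_args (Stk s) = []"

fun legal_cmd :: "cmd \<Rightarrow> bool" where
  "legal_cmd (Cmd v e) \<longleftrightarrow>
     (\<forall>u \<in> set (v # co_args e). \<forall>s \<in> csts u. stuck_less s (co_stk e))"

inductive mstep :: "cmd \<Rightarrow> cmd \<Rightarrow> bool" where
  push: "legal_cmd (Cmd (App v v') e) \<Longrightarrow> mstep (Cmd (App v v') e) (Cmd v (Push v' e))"
| beta: "legal_cmd (Cmd (Lam b) (Push v' e)) \<Longrightarrow> mstep (Cmd (Lam b) (Push v' e)) (Cmd (subst b 0 v') e)"
| proj: "legal_cmd (Cmd (Lam b) (Stk s)) \<Longrightarrow>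
     mstep (Cmd (Lam b) (Stk s)) (Cmd (subst b 0 (Cst s)) (Stk (Cdr s)))"

datatype mstate = MCmd cmd | MTerm "stuck tm"

inductive mrb :: "mstate \<Rightarrow> mstate \<Rightarrow> bool" where
  app: "legal_cmd (Cmd v (Push v' e)) \<Longrightarrow> mrb (MCmd (Cmd v (Push v' e))) (MCmd (Cmd (App v v') e))"
| tp: "legal_cmd (Cmd v (Stk Tp)) \<Longrightarrow> mrb (MCmd (Cmd v (Stk Tp))) (MTerm v)"
| cdr: "legal_cmd (Cmd v (Stk (Cdr s))) \<Longrightarrow>
     mrb (MCmd (Cmd v (Stk (Cdr s)))) (MCmd (Cmd (Lam (abstr s 0 v)) (Stk s)))"

end

theory Submission
  imports Defs
begin

text \<open>Decoding a machine command \<open>\<langle>r \<parallel> v\<^sub>1\<cdot>\<dots>\<cdot>v\<^sub>k\<cdot>cdr\<^sup>n(tp)\<rangle>\<close> as the top-level term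
  \<open>\<lambda>\<^sup>n. r v\<^sub>1 \<dots> v\<^sub>k\<close>, with every \<open>car(cdr\<^sup>m(tp))\<close> read as the index \<open>m\<close>, turns the machine
  into the indexed semantics: a push step is invisible, and beta and projection steps become
  the two indexed reduction rules. Conversely, from a command whose head is not an
  application every indexed step is matched by exactly one machine step, so reduction
  sequences and normal forms correspond. Readback commutes with decoding in the same way;
  since indexed readback is deterministic and machine readback always reaches a term, both
  semantics read back the same pure term.\<close>

fun is_app :: "'c tm \<Rightarrow> bool" where
  "is_app (App a b) = True"
| "is_app _ = False"

lemma is_app_map_tm [simp]: "is_app (map_tm f r) = is_app r"
  by (cases r) auto

lemma map_tm_lift: "map_tm f (lift k x) = lift k (map_tm f x)"
  by (induction x arbitrary: k) auto

lemma map_tm_subst: "map_tm f (subst b k a) = subst (map_tm f b) k (map_tm f a)"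
  by (induction b arbitrary: k a) (auto simp: map_tm_lift)

lemma map_tm_abstr: "inj f \<Longrightarrow> map_tm f (abstr c k v) = abstr (f c) k (map_tm f v)"
  by (induction v arbitrary: k) (auto simp: inj_eq)

lemma map_tm_emb [simp]: "map_tm f (emb v) = emb v"
  by (induction v) auto

lemma plugE_Nil [simp]: "plugE r [] = r"
  by (simp add: plugE_def)

lemma plugE_Cons [simp]: "plugE r (x # xs) = plugE (App r x) xs"
  by (simp add: plugE_def)

lemma plugE_snoc [simp]: "plugE r (xs @ [x]) = App (plugE r xs) x"
  by (simp add: plugE_def)

lemma map_tm_plugE: "map_tm f (plugE r es) = plugE (map_tm f r) (map (map_tm f) es)"
  by (induction es arbitrary: r) auto

lemma plugE_eq_iff:
  assumes "\<not> is_app x" "\<not> is_app y"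
  shows "plugE x xs = plugE y ys \<longleftrightarrow> x = y \<and> xs = ys"
  using assms
proof (induction xs arbitrary: ys rule: rev_induct)
  case Nil
  then show ?case by (cases ys rule: rev_exhaust) auto
next
  case (snoc z zs)
  then show ?case by (cases ys rule: rev_exhaust) auto
qed

lemma csts_lift [simp]: "csts (lift k a) = csts a"
  by (induction a arbitrary: k) auto

lemma csts_subst: "csts (subst b k a) \<subseteq> csts b \<union> csts a"
proof (induction b arbitrary: k a)
  case (App b1 b2)
  then show ?case by simp blast
next
  case (Lam b)
  then show ?case using Lam.IH[of "Suc k" "lift 0 a"] by simp
qed auto

lemma csts_abstr [simp]: "csts (abstr c k v) = csts v - {c}"
  by (induction v arbitrary: k) auto

lemma csts_map_tm [simp]: "csts (map_tm f x) = f ` csts x"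
  by (induction x) auto

lemma csts_plugE [simp]: "csts (plugE r es) = csts r \<union> (\<Union>u\<in>set es. csts u)"
  by (induction es arbitrary: r) auto

lemma csts_emb [simp]: "csts (emb v) = {}"
  by (induction v) auto

lemma Cdr_funpow_depth: "(Cdr ^^ depth s) Tp = s"
  by (induction s) auto

lemma inj_depth: "inj depth"
  by (metis Cdr_funpow_depth injI)

lemma map_tm_depth_eq_iff [simp]: "map_tm depth a = map_tm depth b \<longleftrightarrow> a = b"
  using tm.inj_map[OF inj_depth] by (auto dest: injD)

lemma plugS_0 [simp]: "plugS 0 t = t"
  by (simp add: plugS_def)

lemma plugS_Suc: "plugS (Suc n) t = plugS n (TLam t)"
  by (simp add: plugS_def funpow_Suc_right del: funpow.simps)

lemma top_count_plugS [simp]: "top_count (plugS n t) = n + top_count t"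
  by (induction n) (auto simp: plugS_def)

lemma top_body_plugS [simp]: "top_body (plugS n t) = top_body t"
  by (induction n) (auto simp: plugS_def)

lemma plugS_Body_eq_iff: "plugS n (Body x) = plugS m (Body y) \<longleftrightarrow> n = m \<and> x = y"
  by (metis add_0_right top_body.simps(1) top_body_plugS top_count.simps(1) top_count_plugS)

fun decode :: "cmd \<Rightarrow> top" where
  "decode (Cmd r e) = plugS (depth (co_stk e)) (Body (map_tm depth (plugE r (co_args e))))"

fun decode_state :: "mstate \<Rightarrow> top" where
  "decode_state (MCmd c) = decode c"
| "decode_state (MTerm v) = Body (map_tm depth v)"

lemma legal_top_decode: "legal_cmd c \<Longrightarrow> legal_top (decode c)"
  by (cases c) (auto simp: legal_top_def stuck_less_def)

lemma legal_cmd_mstep: "mstep c d \<Longrightarrow> legal_cmd d"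
proof (induction rule: mstep.induct)
  case (beta b v' e)
  then show ?case using csts_subst by fastforce
next
  case (proj b s)
  then show ?case using csts_subst[of b 0 "Cst s"] by (auto simp: stuck_less_def) fastforce
qed auto

lemma legal_cmd_mstep_rtranclp: "mstep\<^sup>*\<^sup>* c d \<Longrightarrow> legal_cmd c \<Longrightarrow> legal_cmd d"
  by (induction rule: rtranclp_induct) (auto dest: legal_cmd_mstep)

lemma decode_eq_plugS_LamD:
  assumes "\<not> is_app r" "decode (Cmd r e) = plugS n (Body (plugE (Lam b) es))"
  obtains b0 where "n = depth (co_stk e)" "r = Lam b0" "b = map_tm depth b0"
    "es = map (map_tm depth) (co_args e)"
proof -
  from assms have "n = depth (co_stk e)"
    and "plugE (map_tm depth r) (map (map_tm depth) (co_args e)) = plugE (Lam b) es"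
    by (auto simp: plugS_Body_eq_iff map_tm_plugE)
  with assms(1) show thesis
    by (cases r) (auto simp: plugE_eq_iff intro: that)
qed

lemma mstep_decode:
  assumes "mstep (Cmd r e) d"
  shows "if is_app r then decode d = decode (Cmd r e) else istep (decode (Cmd r e)) (decode d)"
  using assms
proof cases
  case (beta b v' e')
  then have "legal_top (decode (Cmd (Lam b) (Push v' e')))" using legal_top_decode by blast
  with beta show ?thesis
    using istep.beta[of "depth (co_stk e')" "map_tm depth b" "map_tm depth v'"
        "map (map_tm depth) (co_args e')"]
    by (simp add: map_tm_plugE map_tm_subst)
next
  case (proj b s)
  then have "legal_top (decode (Cmd (Lam b) (Stk s)))" using legal_top_decode by blast
  with proj show ?thesis
    using istep.lam[of "depth s" "map_tm depth b"] by (simp add: map_tm_subst plugS_Suc)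
qed auto

lemma mstep_rtranclp_decode:
  "mstep\<^sup>*\<^sup>* c d \<Longrightarrow> istep\<^sup>*\<^sup>* (decode c) (decode d)"
proof (induction rule: rtranclp_induct)
  case (step d d')
  obtain r e where "d = Cmd r e" by (cases d)
  with step show ?case
    using mstep_decode[of r e d'] by (auto split: if_splits intro: rtranclp.rtrancl_into_rtrancl)
qed simp

lemma mstep_unwind_apps:
  "legal_cmd (Cmd r e) \<Longrightarrow>
    \<exists>r' e'. mstep\<^sup>*\<^sup>* (Cmd r e) (Cmd r' e') \<and> decode (Cmd r' e') = decode (Cmd r e) \<and> \<not> is_app r'"
proof (induction r arbitrary: e)
  case (App r1 r2)
  from App.prems have push: "mstep (Cmd (App r1 r2) e) (Cmd r1 (Push r2 e))"
    by (rule mstep.push)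
  from App.IH(1)[OF legal_cmd_mstep[OF push]] push show ?case
    by (auto intro: converse_rtranclp_into_rtranclp)
qed (fastforce intro: exI[of _ e])+

lemma istep_decode_mstep:
  assumes legal: "legal_cmd (Cmd r e)" and head: "\<not> is_app r"
    and step: "istep (decode (Cmd r e)) y"
  shows "\<exists>c. mstep (Cmd r e) c \<and> decode c = y"
  using step
proof cases
  case (beta n b a es)
  then have "decode (Cmd r e) = plugS n (Body (plugE (Lam b) (a # es)))" by simp
  with head obtain b0 where "n = depth (co_stk e)" "r = Lam b0" "b = map_tm depth b0"
    "a # es = map (map_tm depth) (co_args e)"
    by (rule decode_eq_plugS_LamD)
  moreover from this(4) obtain a0 e0 where "e = Push a0 e0" "a = map_tm depth a0"
    "es = map (map_tm depth) (co_args e0)"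
    by (cases e) auto
  ultimately show ?thesis
    using mstep.beta[of b0 a0 e0] legal beta
    by (auto simp: map_tm_plugE map_tm_subst)
next
  case (lam n b)
  then have "decode (Cmd r e) = plugS n (Body (plugE (Lam b) []))" by simp
  with head obtain b0 where "n = depth (co_stk e)" "r = Lam b0" "b = map_tm depth b0"
    "[] = map (map_tm depth) (co_args e)"
    by (rule decode_eq_plugS_LamD)
  moreover from this(4) obtain s where "e = Stk s"
    by (cases e) auto
  ultimately show ?thesis
    using mstep.proj[of b0 s] legal lam
    by (auto simp: map_tm_subst plugS_Suc)
qed

lemma istep_rtranclp_decode_mstep:
  "istep\<^sup>*\<^sup>* x t \<Longrightarrow> legal_cmd c \<Longrightarrow> decode c = x \<Longrightarrow>
    \<exists>r e. mstep\<^sup>*\<^sup>* c (Cmd r e) \<and> decode (Cmd r e) = t \<and> \<not> is_app r"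
proof (induction arbitrary: c rule: converse_rtranclp_induct)
  case base
  then show ?case using mstep_unwind_apps by (cases c) blast
next
  case (step x y)
  obtain r e where unwind: "mstep\<^sup>*\<^sup>* c (Cmd r e)" "decode (Cmd r e) = x" "\<not> is_app r"
    using step.prems mstep_unwind_apps by (cases c) blast
  moreover have legal: "legal_cmd (Cmd r e)"
    using unwind(1) step.prems(1) by (rule legal_cmd_mstep_rtranclp)
  ultimately obtain c' where c': "mstep (Cmd r e) c'" "decode c' = y"
    using istep_decode_mstep step.hyps(1) by blast
  from step.IH[OF legal_cmd_mstep[OF c'(1)] c'(2)] obtain r' e' where
    "mstep\<^sup>*\<^sup>* c' (Cmd r' e')" "decode (Cmd r' e') = t" "\<not> is_app r'"
    by blast
  moreover have "mstep\<^sup>*\<^sup>* c c'" using unwind(1) c'(1) by (rule rtranclp.rtrancl_into_rtrancl)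
  ultimately show ?case by (blast intro: rtranclp_trans)
qed

lemma mstep_normal_iff_istep_normal:
  assumes "legal_cmd (Cmd r e)" "\<not> is_app r"
  shows "(\<nexists>d. mstep (Cmd r e) d) \<longleftrightarrow> (\<nexists>t. istep (decode (Cmd r e)) t)"
  using istep_decode_mstep[OF assms] mstep_decode[of r e] assms(2) by auto

lemma mstep_normal_not_is_app:
  "legal_cmd (Cmd r e) \<Longrightarrow> \<nexists>d. mstep (Cmd r e) d \<Longrightarrow> \<not> is_app r"
proof
  assume legal: "legal_cmd (Cmd r e)" and normal: "\<nexists>d. mstep (Cmd r e) d" and "is_app r"
  then obtain a b where "r = App a b" by (cases r) auto
  with legal normal show False using mstep.push by blast
qed

lemma mrb_decode_state:
  "mrb x y \<Longrightarrow> decode_state y = decode_state x \<or> irb (decode_state x) (decode_state y)"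
proof (induction rule: mrb.induct)
  case (cdr v s)
  then have "legal_top (plugS (depth s) (TLam (Body (map_tm depth v))))"
    using legal_top_decode by (fastforce simp: plugS_Suc)
  then show ?case
    using irb.intros by (simp add: plugS_Suc map_tm_abstr[OF inj_depth])
qed simp_all

lemma mrb_rtranclp_decode_state:
  "mrb\<^sup>*\<^sup>* x y \<Longrightarrow> irb\<^sup>*\<^sup>* (decode_state x) (decode_state y)"
proof (induction rule: rtranclp_induct)
  case (step y z)
  then show ?case using mrb_decode_state by (metis rtranclp.rtrancl_into_rtrancl)
qed simp

lemma mrb_reaches_term_Stk:
  "legal_cmd (Cmd v (Stk s)) \<Longrightarrow> \<exists>w. mrb\<^sup>*\<^sup>* (MCmd (Cmd v (Stk s))) (MTerm w)"
proof (induction s arbitrary: v)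
  case Tp
  then show ?case using mrb.tp by blast
next
  case (Cdr s)
  \<comment> \<open>The abstracted constant \<open>car(s)\<close> is the only one of depth \<open>depth s\<close>.\<close>
  have "depth c < depth s" if "c \<in> csts v" "c \<noteq> s" for c
  proof -
    have "depth c < Suc (depth s)" using Cdr.prems that(1) by (auto simp: stuck_less_def)
    moreover have "depth c \<noteq> depth s" using that(2) inj_depth by (auto simp: inj_eq)
    ultimately show ?thesis by simp
  qed
  then have "legal_cmd (Cmd (Lam (abstr s 0 v)) (Stk s))" by (auto simp: stuck_less_def)
  with Cdr.IH obtain w where "mrb\<^sup>*\<^sup>* (MCmd (Cmd (Lam (abstr s 0 v)) (Stk s))) (MTerm w)"
    by blast
  then show ?case
    using mrb.cdr[OF Cdr.prems] by (meson converse_rtranclp_into_rtranclp)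
qed

lemma mrb_reaches_term: "legal_cmd (Cmd v e) \<Longrightarrow> \<exists>w. mrb\<^sup>*\<^sup>* (MCmd (Cmd v e)) (MTerm w)"
proof (induction e arbitrary: v)
  case (Push v' e)
  then have "legal_cmd (Cmd (App v v') e)" by auto
  with Push.IH obtain w where "mrb\<^sup>*\<^sup>* (MCmd (Cmd (App v v') e)) (MTerm w)" by blast
  then show ?case using mrb.app[OF Push.prems] by (meson converse_rtranclp_into_rtranclp)
next
  case (Stk s)
  then show ?case using mrb_reaches_term_Stk by blast
qed

lemma irb_deterministic: "irb x y \<Longrightarrow> irb x z \<Longrightarrow> y = z"
  by (elim irb.cases) (auto simp: plugS_Suc[symmetric] plugS_Body_eq_iff)

lemma not_irb_Body: "\<not> irb (Body a) y"
proof
  assume "irb (Body a) y"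
  then show False
  proof cases
    case (1 n v)
    then have "top_count (Body a) = top_count (plugS n (TLam (Body v)))" by simp
    then show False by simp
  qed
qed

lemma irb_rtranclp_Body_unique: "irb\<^sup>*\<^sup>* x (Body a) \<Longrightarrow> irb\<^sup>*\<^sup>* x (Body b) \<Longrightarrow> a = b"
proof (induction arbitrary: b rule: converse_rtranclp_induct)
  case base
  then show ?case by (cases rule: converse_rtranclpE) (auto simp: not_irb_Body)
next
  case (step x y)
  from step.prems show ?case
  proof (cases rule: converse_rtranclpE)
    case base
    with step(1) show ?thesis by (simp add: not_irb_Body)
  next
    case (step y')
    with \<open>irb x y\<close> have "y' = y" by (simp add: irb_deterministic)
    with step step.IH show ?thesis by blast
  qed
qed

lemma mstep_normal_form_if_istep_normal_form:
  assumes "legal_cmd c" "istep\<^sup>*\<^sup>* (decode c) t" "\<nexists>t'. istep t t'"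
  shows "\<exists>d. mstep\<^sup>*\<^sup>* c d \<and> (\<nexists>d'. mstep d d') \<and> decode d = t"
proof -
  obtain r e where d: "mstep\<^sup>*\<^sup>* c (Cmd r e)" "decode (Cmd r e) = t" "\<not> is_app r"
    using istep_rtranclp_decode_mstep[OF assms(2,1) refl] by blast
  moreover have "legal_cmd (Cmd r e)" using d(1) assms(1) by (rule legal_cmd_mstep_rtranclp)
  ultimately show ?thesis using assms(3) mstep_normal_iff_istep_normal by blast
qed

lemma istep_normal_form_if_mstep_normal_form:
  assumes "legal_cmd c" "mstep\<^sup>*\<^sup>* c d" "\<nexists>d'. mstep d d'"
  shows "istep\<^sup>*\<^sup>* (decode c) (decode d) \<and> (\<nexists>t'. istep (decode d) t')"
proof -
  obtain r e where d: "d = Cmd r e" by (cases d)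
  have "legal_cmd d" using assms(2,1) by (rule legal_cmd_mstep_rtranclp)
  then show ?thesis
    using assms(2,3) mstep_rtranclp_decode mstep_normal_not_is_app mstep_normal_iff_istep_normal
    unfolding d by blast
qed

lemma mrb_rtranclp_if_irb_rtranclp:
  assumes "legal_cmd c" "irb\<^sup>*\<^sup>* (decode c) (Body (map_tm depth w))"
  shows "mrb\<^sup>*\<^sup>* (MCmd c) (MTerm w)"
proof -
  obtain w' where w': "mrb\<^sup>*\<^sup>* (MCmd c) (MTerm w')"
    using assms(1) mrb_reaches_term by (cases c) blast
  then have "irb\<^sup>*\<^sup>* (decode c) (Body (map_tm depth w'))"
    using mrb_rtranclp_decode_state by fastforce
  then have "map_tm depth w' = map_tm depth w" using assms(2) by (rule irb_rtranclp_Body_unique)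
  with w' show ?thesis by simp
qed

theorem theorem3:
  fixes v v' :: lam
  shows "(\<exists>t. istep\<^sup>*\<^sup>* (Body (emb v)) t \<and> \<not> (\<exists>t'. istep t t') \<and> irb\<^sup>*\<^sup>* t (Body (emb v')))
     \<longleftrightarrow> (\<exists>c. mstep\<^sup>*\<^sup>* (Cmd (emb v) (Stk Tp)) c \<and> \<not> (\<exists>c'. mstep c c')
              \<and> mrb\<^sup>*\<^sup>* (MCmd c) (MTerm (emb v')))"
proof -
  let ?c0 = "Cmd (emb v) (Stk Tp)"
  have start: "legal_cmd ?c0" "decode ?c0 = Body (emb v)" by simp_all
  have readback: "irb\<^sup>*\<^sup>* (decode c) (Body (emb v')) \<longleftrightarrow> mrb\<^sup>*\<^sup>* (MCmd c) (MTerm (emb v'))"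
    if "legal_cmd c" for c
    using mrb_rtranclp_if_irb_rtranclp[OF that, of "emb v'"]
      mrb_rtranclp_decode_state[of "MCmd c" "MTerm (emb v')"]
    by auto
  show ?thesis
    using start mstep_normal_form_if_istep_normal_form[OF start(1)]
      istep_normal_form_if_mstep_normal_form[OF start(1)] readback legal_cmd_mstep_rtranclp
    by metis
qed

end
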